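(* Let $p\geq 5$ be an integer and $s=\frac1p$. Let $n\geq 1$ be an integer. Then there is no integer strictly between $-2\left(n-\frac12+\frac{1}{2^{p+1}}\right)^s$ and $-2\left(n-\frac12\right)^s$. *)

theory Defs
  imports Complex_Main
begin

end

theory Submission
  imports Defs
begin

text \<open>After negating, raising to the \<open>p\<close>-th power turns an integer \<open>k\<close> in the interval into
  \<open>2^p a < k^p < 2^p a + 1/2\<close> with \<open>a = n - 1/2\<close>. But \<open>2^p a = 2^(p-1) (2n - 1)\<close> is an integer,
  so the integer \<open>k^p\<close> cannot lie there.\<close>

lemma power_powr_inverse:
  fixes x :: real
  assumes "x > 0" "p > 0"
  shows "(x powr (1 / real p)) ^ p = x"
  using assms by (simp add: powr_realpow [symmetric] powr_powr)

lemma power_of_less_root: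
  fixes x y :: real
  assumes "x > 0" "p > 0" "2 * x powr (1 / real p) < y"
  shows "2 ^ p * x < y ^ p"
proof -
  have "(2 * x powr (1 / real p)) ^ p < y ^ p"
    using assms by (intro power_strict_mono) auto
  then show ?thesis
    using assms by (simp add: power_mult_distrib power_powr_inverse)
qed

lemma power_of_greater_root:
  fixes x y :: real
  assumes "x > 0" "p > 0" "0 \<le> y" "y < 2 * x powr (1 / real p)"
  shows "y ^ p < 2 ^ p * x"
proof -
  have "y ^ p < (2 * x powr (1 / real p)) ^ p"
    using assms by (intro power_strict_mono) auto
  then show ?thesis
    using assms by (simp add: power_mult_distrib power_powr_inverse)
qed

lemma no_int_between_doubled_roots:
  fixes a :: real and N :: int
  assumes "a > 0" "p > 0" "real_of_int N = 2 ^ p * a"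
  shows "\<not> (\<exists>k::int. 2 * a powr (1 / real p) < k \<and>
                      k < 2 * (a + 1 / 2 ^ (p + 1)) powr (1 / real p))"
proof
  assume "\<exists>k::int. 2 * a powr (1 / real p) < k \<and>
                   k < 2 * (a + 1 / 2 ^ (p + 1)) powr (1 / real p)"
  then obtain k :: int where lower: "2 * a powr (1 / real p) < k"
    and upper: "k < 2 * (a + 1 / 2 ^ (p + 1)) powr (1 / real p)"
    by blast
  have "real_of_int N < real_of_int (k ^ p)"
    using power_of_less_root [OF assms(1,2) lower] assms(3) by simp
  then have "N < k ^ p"
    by linarith
  moreover have "real_of_int (k ^ p) < real_of_int N + 1 / 2"
  proof -
    have "0 \<le> real_of_int k"
      using lower by (smt (verit) powr_ge_zero)
    then have "real_of_int k ^ p < 2 ^ p * (a + 1 / 2 ^ (p + 1))"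
      using assms(1,2) upper by (intro power_of_greater_root) (auto intro: add_pos_pos)
    then show ?thesis
      using assms(3) by (simp add: algebra_simps)
  qed
  then have "k ^ p < N + 1"
    by linarith
  ultimately show False
    by linarith
qed

theorem lemma3p2:
  fixes p :: nat and n :: nat and s :: real
  assumes "p \<ge> 5" and "s = 1 / real p" and "n \<ge> 1"
  shows "\<not> (\<exists>m::int.
           - 2 * (real n - 1/2 + 1 / 2 ^ (p + 1)) powr s < real_of_int m \<and>
           real_of_int m < - 2 * (real n - 1/2) powr s)"
proof
  assume "\<exists>m::int.
           - 2 * (real n - 1/2 + 1 / 2 ^ (p + 1)) powr s < real_of_int m \<and>
           real_of_int m < - 2 * (real n - 1/2) powr s"
  then obtain m :: int
    where "- 2 * (real n - 1/2 + 1 / 2 ^ (p + 1)) powr s < real_of_int m"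
      and "real_of_int m < - 2 * (real n - 1/2) powr s"
    by blast
  then have "\<exists>k::int. 2 * (real n - 1/2) powr s < real_of_int k \<and>
                      real_of_int k < 2 * (real n - 1/2 + 1 / 2 ^ (p + 1)) powr s"
    by (intro exI [of _ "- m"]) simp
  moreover obtain q where p: "p = Suc q"
    using assms(1) by (cases p) auto
  moreover have "real_of_int (2 ^ q * (2 * int n - 1)) = 2 ^ p * (real n - 1/2)"
    unfolding p by (simp add: algebra_simps)
  moreover have "real n - 1/2 > 0"
    using assms(3) by simp
  ultimately show False
    using no_int_between_doubled_roots [of "real n - 1/2" p "2 ^ q * (2 * int n - 1)"] assms(2)
    by blast
qed

end
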